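(* Let $k\ge 2$, let $H$ be a finite $k$-uniform hypergraph and let $G$ be the 2-section of $H$. For every nonnegative integer $t$, the graph ${\rm ILT}'_t(G)$ is the 2-section of ${\rm ILTH}_t(H)$.
   Context: The 2-section of a hypergraph is the graph on the same vertex set in which two distinct vertices are adjacent iff some hyperedge contains both. ${\rm ILTH}_t(H)$ is defined by ${\rm ILTH}_0(H)=H$ and: given $H_t={\rm ILTH}_t(H)$, for each vertex $x$ add a new vertex $x'$ (its clone), and let the hyperedges of $H_{t+1}$ be those of $H_t$ together with all $e-x+x'=(e\setminus\{x\})\cup\{x'\}$ for $e\in E(H_t)$, $x\in e$. The graph process ${\rm ILT}'$: ${\rm ILT}'_0(G)=G$; given ${\rm ILT}'_t(G)$, the graph ${\rm ILT}'_{t+1}(G)$ has vertex set consisting of every vertex $v$ of ${\rm ILT}'_t(G)$ together with a new vertex $v'$ for each such $v$, and edge set consisting of $uv$, $uv'$ and $u'v$ for every edge $uv$ of ${\rm ILT}'_t(G)$ (and no other edges). *)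

theory Defs
  imports Main
begin

definition k_uniform :: "nat \<Rightarrow> 'v set \<Rightarrow> 'v set set \<Rightarrow> bool" where
  "k_uniform k V E \<longleftrightarrow> (\<forall>e\<in>E. e \<subseteq> V \<and> card e = k)"

definition two_section :: "'v set \<times> 'v set set \<Rightarrow> 'v set \<times> ('v \<times> 'v) set" where
  "two_section H = (fst H, {(u, v). u \<noteq> v \<and> (\<exists>e\<in>snd H. u \<in> e \<and> v \<in> e)})"

(* Vertex naming: an original vertex a is (a,0); at step t the clone of (a,n) is
   (a, n + 2^t).  Since all vertices present at step t have second component < 2^t,
   clones are fresh and distinct. *)
definition clone :: "nat \<Rightarrow> 'a \<times> nat \<Rightarrow> 'a \<times> nat" where
  "clone t x = (fst x, snd x + 2 ^ t)"

definition emb :: "'a \<Rightarrow> 'a \<times> nat" where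
  "emb a = (a, 0)"

fun ILTH :: "nat \<Rightarrow> 'a set \<times> 'a set set \<Rightarrow> ('a \<times> nat) set \<times> ('a \<times> nat) set set" where
  "ILTH 0 H = (emb ` fst H, (\<lambda>e. emb ` e) ` snd H)"
| "ILTH (Suc t) H =
     (let V = fst (ILTH t H); E = snd (ILTH t H) in
      (V \<union> clone t ` V,
       E \<union> {(e - {x}) \<union> {clone t x} | e x. e \<in> E \<and> x \<in> e}))"

fun ILT' :: "nat \<Rightarrow> 'a set \<times> ('a \<times> 'a) set \<Rightarrow> ('a \<times> nat) set \<times> (('a \<times> nat) \<times> ('a \<times> nat)) set" where
  "ILT' 0 G = (emb ` fst G, (\<lambda>(u, v). (emb u, emb v)) ` snd G)"
| "ILT' (Suc t) G =
     (let V = fst (ILT' t G); R = snd (ILT' t G) in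
      (V \<union> clone t ` V,
       R \<union> {(u, clone t v) | u v. (u, v) \<in> R} \<union> {(clone t u, v) | u v. (u, v) \<in> R}))"

end

theory Submission
  imports Defs
begin

text \<open>One cloning step turns a hyperedge e containing x into e - x + x', whose pairs are those of
  e - x together with the pairs {y, x'} for y \<in> e - {x}; in the 2-section these are exactly the
  edges y x' and x' y added by one ILT' step for the edge x y.  The only thing to check is that
  no new loop appears, which holds because clones are fresh vertices.\<close>

definition clone_hyperedges :: "('v \<Rightarrow> 'v) \<Rightarrow> 'v set set \<Rightarrow> 'v set set" where
  "clone_hyperedges c E = E \<union> {(e - {x}) \<union> {c x} | e x. e \<in> E \<and> x \<in> e}"

definition clone_edges :: "('v \<Rightarrow> 'v) \<Rightarrow> ('v \<times> 'v) set \<Rightarrow> ('v \<times> 'v) set" where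
  "clone_edges c R = R \<union> {(u, c v) | u v. (u, v) \<in> R} \<union> {(c u, v) | u v. (u, v) \<in> R}"

lemma mem_clone_hyperedges:
  "e' \<in> clone_hyperedges c E \<longleftrightarrow> e' \<in> E \<or> (\<exists>e\<in>E. \<exists>x\<in>e. e' = (e - {x}) \<union> {c x})"
  by (auto simp: clone_hyperedges_def)

lemma clone_hyperedgesI: "e \<in> E \<Longrightarrow> x \<in> e \<Longrightarrow> (e - {x}) \<union> {c x} \<in> clone_hyperedges c E"
  unfolding clone_hyperedges_def by blast

lemma mem_clone_edges:
  "(a, b) \<in> clone_edges c R \<longleftrightarrow>
     (a, b) \<in> R \<or> (\<exists>v. b = c v \<and> (a, v) \<in> R) \<or> (\<exists>u. a = c u \<and> (u, b) \<in> R)"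
  by (auto simp: clone_edges_def)

lemma mem_two_section_edges:
  "(u, v) \<in> snd (two_section H) \<longleftrightarrow> u \<noteq> v \<and> (\<exists>e\<in>snd H. u \<in> e \<and> v \<in> e)"
  by (simp add: two_section_def)

lemma ILTH_Suc_eq:
  "ILTH (Suc t) H =
     (fst (ILTH t H) \<union> clone t ` fst (ILTH t H), clone_hyperedges (clone t) (snd (ILTH t H)))"
  by (simp add: Let_def clone_hyperedges_def)

lemma ILT'_Suc_eq:
  "ILT' (Suc t) G =
     (fst (ILT' t G) \<union> clone t ` fst (ILT' t G), clone_edges (clone t) (snd (ILT' t G)))"
  by (simp add: Let_def clone_edges_def)

lemma clone_hyperedges_subset:
  assumes "\<And>e. e \<in> E \<Longrightarrow> e \<subseteq> V" and "e \<in> clone_hyperedges c E"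
  shows "e \<subseteq> V \<union> c ` V"
  using assms by (auto simp: clone_hyperedges_def)

lemma ILTH_edge_subset:
  assumes "\<And>e. e \<in> E \<Longrightarrow> e \<subseteq> V"
  shows "e \<in> snd (ILTH t (V, E)) \<Longrightarrow> e \<subseteq> fst (ILTH t (V, E))"
proof (induction t arbitrary: e)
  case 0
  then show ?case using assms by auto
next
  case (Suc t)
  with clone_hyperedges_subset[OF Suc.IH] show ?case
    unfolding ILTH_Suc_eq by simp
qed

lemma ILTH_vertex_bound: "v \<in> fst (ILTH t H) \<Longrightarrow> snd v < 2 ^ t"
proof (induction t arbitrary: v)
  case 0
  then show ?case by (auto simp: emb_def)
next
  case (Suc t)
  then consider "v \<in> fst (ILTH t H)" | w where "w \<in> fst (ILTH t H)" "v = clone t w"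
    unfolding ILTH_Suc_eq by auto
  then show ?case
  proof cases
    case 1
    then show ?thesis using Suc.IH[of v] by simp
  next
    case 2
    then show ?thesis using Suc.IH[of w] by (simp add: clone_def)
  qed
qed

lemma clone_fresh: "v \<in> fst (ILTH t H) \<Longrightarrow> clone t v \<notin> fst (ILTH t H)"
  using ILTH_vertex_bound[of "clone t v" t H] by (auto simp: clone_def)

lemma ILT'_vertices: "fst (ILT' t G) = fst (ILTH t H)" if "fst G = fst H"
  using that
  by (induction t) (simp_all only: ILTH_Suc_eq ILT'_Suc_eq fst_conv ILTH.simps(1) ILT'.simps(1))

lemma two_section_image:
  assumes "inj f"
  shows "two_section (f ` V, (\<lambda>e. f ` e) ` E) =
           (f ` V, (\<lambda>(u, v). (f u, f v)) ` snd (two_section (V, E)))"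
  using assms by (fastforce simp: two_section_def inj_eq)

lemma clone_edges_two_section_subset:
  assumes "\<And>e. e \<in> E \<Longrightarrow> e \<subseteq> V" and "\<And>v. v \<in> V \<Longrightarrow> c v \<notin> V"
  shows "clone_edges c (snd (two_section (V, E))) \<subseteq> snd (two_section (W, clone_hyperedges c E))"
proof (rule subrelI)
  have no_loop: "c v \<noteq> u" if "u \<in> e" "v \<in> e" "e \<in> E" for u v e
    using that assms by blast
  fix a b
  assume "(a, b) \<in> clone_edges c (snd (two_section (V, E)))"
  then consider "(a, b) \<in> snd (two_section (V, E))"
    | e v where "b = c v" "e \<in> E" "a \<in> e" "v \<in> e" "a \<noteq> v"
    | e u where "a = c u" "e \<in> E" "u \<in> e" "b \<in> e" "u \<noteq> b"
    by (auto simp: mem_clone_edges mem_two_section_edges)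
  then show "(a, b) \<in> snd (two_section (W, clone_hyperedges c E))"
  proof cases
    case 1
    moreover have "E \<subseteq> clone_hyperedges c E"
      by (auto simp: clone_hyperedges_def)
    ultimately show ?thesis
      by (auto simp: mem_two_section_edges)
  next
    case (2 e v)
    from 2(2,4) have "(e - {v}) \<union> {c v} \<in> clone_hyperedges c E"
      by (rule clone_hyperedgesI)
    moreover have "a \<noteq> b" "a \<in> (e - {v}) \<union> {c v}" "b \<in> (e - {v}) \<union> {c v}"
      using 2 no_loop[of a e v] by auto
    ultimately show ?thesis
      unfolding mem_two_section_edges snd_conv by (intro conjI bexI)
  next
    case (3 e u)
    from 3(2,3) have "(e - {u}) \<union> {c u} \<in> clone_hyperedges c E"
      by (rule clone_hyperedgesI)
    moreover have "a \<noteq> b" "a \<in> (e - {u}) \<union> {c u}" "b \<in> (e - {u}) \<union> {c u}"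
      using 3 no_loop[of b e u] by auto
    ultimately show ?thesis
      unfolding mem_two_section_edges snd_conv by (intro conjI bexI)
  qed
qed

lemma two_section_clone_hyperedges_subset:
  "snd (two_section (W, clone_hyperedges c E)) \<subseteq> clone_edges c (snd (two_section (V, E)))"
proof (rule subrelI)
  fix a b
  assume "(a, b) \<in> snd (two_section (W, clone_hyperedges c E))"
  then obtain e' where "a \<noteq> b" "e' \<in> clone_hyperedges c E" "a \<in> e'" "b \<in> e'"
    by (auto simp: mem_two_section_edges)
  then consider "e' \<in> E" | e x where "e \<in> E" "x \<in> e" "e' = (e - {x}) \<union> {c x}"
    by (auto simp: mem_clone_hyperedges)
  then show "(a, b) \<in> clone_edges c (snd (two_section (V, E)))"
  proof cases
    case 1
    with \<open>a \<noteq> b\<close> \<open>a \<in> e'\<close> \<open>b \<in> e'\<close> show ?thesis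
      by (auto simp: mem_clone_edges mem_two_section_edges)
  next
    case (2 e x)
    then consider "a = c x" "b \<in> e" "b \<noteq> x" | "b = c x" "a \<in> e" "a \<noteq> x" | "a \<in> e" "b \<in> e"
      using \<open>a \<noteq> b\<close> \<open>a \<in> e'\<close> \<open>b \<in> e'\<close> by auto
    then show ?thesis
      using \<open>a \<noteq> b\<close> \<open>e \<in> E\<close> \<open>x \<in> e\<close>
      by cases (auto simp: mem_clone_edges mem_two_section_edges)
  qed
qed

lemma two_section_clone_hyperedges:
  assumes "\<And>e. e \<in> E \<Longrightarrow> e \<subseteq> V" and "\<And>v. v \<in> V \<Longrightarrow> c v \<notin> V"
  shows "two_section (W, clone_hyperedges c E) = (W, clone_edges c (snd (two_section (V, E))))"
proof -
  have "snd (two_section (W, clone_hyperedges c E)) = clone_edges c (snd (two_section (V, E)))"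
    using clone_edges_two_section_subset[OF assms] two_section_clone_hyperedges_subset
    by (rule equalityI[rotated])
  then show ?thesis
    by (simp add: two_section_def)
qed

theorem lemma2p2:
  fixes V :: "'a set" and E :: "'a set set" and k t :: nat
  assumes "k \<ge> 2" and "finite V" and "k_uniform k V E"
  shows "ILT' t (two_section (V, E)) = two_section (ILTH t (V, E))"
proof (induction t)
  case 0
  have "inj (emb :: 'a \<Rightarrow> 'a \<times> nat)"
    by (simp add: inj_def emb_def)
  then show ?case
    by (simp add: two_section_image) (simp add: two_section_def)
next
  case (Suc t)
  obtain Vt Et where ILTH_t: "ILTH t (V, E) = (Vt, Et)"
    by fastforce
  have "\<And>e. e \<in> E \<Longrightarrow> e \<subseteq> V"
    using assms(3) by (simp add: k_uniform_def)
  then have "\<And>e. e \<in> Et \<Longrightarrow> e \<subseteq> Vt"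
    using ILTH_edge_subset[of E V _ t] by (simp add: ILTH_t)
  moreover have "\<And>v. v \<in> Vt \<Longrightarrow> clone t v \<notin> Vt"
    using clone_fresh[of _ t "(V, E)"] by (simp add: ILTH_t)
  ultimately have "two_section (ILTH (Suc t) (V, E)) =
      (Vt \<union> clone t ` Vt, clone_edges (clone t) (snd (two_section (Vt, Et))))"
    unfolding ILTH_Suc_eq ILTH_t fst_conv snd_conv by (rule two_section_clone_hyperedges)
  moreover have "ILT' t (two_section (V, E)) = two_section (Vt, Et)"
    using Suc ILTH_t by simp
  ultimately show ?case
    unfolding ILT'_Suc_eq by (simp add: two_section_def)
qed

end
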